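(* Let $D$ be a diagram of a knot $K$, let $E=\{e_1,\dots,e_n\}$ be a generating set of seeds for $D$ with $n=\omega(D)$ elements, and let $H$ be a Coxeter group with Coxeter rank $r(H)=n$. Let $\mathcal{A}\subseteq\mathrm{Gen}(H)$ be a robust set. Then the following are equivalent. (i) There is a surjective homomorphism $\pi_1(S^3\setminus K)\twoheadrightarrow H$ sending meridians to reflections, equivalently an $H$-coloring of $D$ by reflections whose labels generate $H$. (ii) There exist $R=\{\rho_1,\dots,\rho_n\}\in\mathcal{A}$ and a bijection $f:E\to R$ such that labeling each seed $e_i$ by $f(e_i)$ extends to an $H$-coloring of $D$.
   Context: A Coxeter group is given by generators $s$ with $s^2=1$ and relations $(st)^{k}=1$ prescribed by a labeled graph. A reflection is any conjugate of a generator. The Coxeter rank $r(H)$ is the minimal number of reflections generating $H$. In a knot diagram $D$, at a crossing with overstrand $o$ and understrands $u_1,u_2$, a coloring move adds $u_2$ to a set of colored strands that already contains $o$ and $u_1$. A generating set of seeds is a set of strands from which coloring moves eventually color every strand. The Wirtinger number $\omega(D)$ is the minimal size of a generating set of seeds. An $H$-coloring of $D$ by reflections assigns a reflection $g_s\in H$ to each strand $s$ such that $g_o g_{u_1} g_o^{-1}=g_{u_2}$ at every crossing. $\mathrm{Gen}(H)$ denotes the set of generating sets of $H$ consisting of exactly $r(H)$ reflections. Two members $\{r_i\},\{\rho_i\}$ are equivalent if $\{g^{-1}r_ig\}=\{\rho_i\}$ for some $g\in H$. A subset $\mathcal{A}\subseteq\mathrm{Gen}(H)$ is robust if it meets every equivalence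 class. *)

theory Defs
  imports "HOL-Algebra.Generated_Groups"
begin

text \<open>A knot diagram with N >= 1 strands (arcs) 0..N-1, traversed in order along
the knot. At crossing i (i < N) the understrand i ends and the understrand
(i+1) mod N begins; the overstrand of crossing i is ov i.\<close>

definition knot_diagram :: "nat \<Rightarrow> (nat \<Rightarrow> nat) \<Rightarrow> bool" where
  "knot_diagram N ov \<longleftrightarrow> 1 \<le> N \<and> (\<forall>i<N. ov i < N)"

definition crossings :: "nat \<Rightarrow> (nat \<Rightarrow> nat) \<Rightarrow> (nat \<times> nat \<times> nat) set" where
  "crossings N ov = {(ov i, i, Suc i mod N) | i. i < N}"

text \<open>Strands colored from a seed set E by repeated coloring moves
(either understrand may play the role of u1).\<close>

inductive_set colored_from :: "nat \<Rightarrow> (nat \<Rightarrow> nat) \<Rightarrow> nat set \<Rightarrow> nat set"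
  for N ov E where
  seed: "e \<in> E \<Longrightarrow> e \<in> colored_from N ov E"
| move1: "(a, u1, u2) \<in> crossings N ov \<Longrightarrow> a \<in> colored_from N ov E \<Longrightarrow>
          u1 \<in> colored_from N ov E \<Longrightarrow> u2 \<in> colored_from N ov E"
| move2: "(a, u1, u2) \<in> crossings N ov \<Longrightarrow> a \<in> colored_from N ov E \<Longrightarrow>
          u2 \<in> colored_from N ov E \<Longrightarrow> u1 \<in> colored_from N ov E"

definition generating_seeds :: "nat \<Rightarrow> (nat \<Rightarrow> nat) \<Rightarrow> nat set \<Rightarrow> bool" where
  "generating_seeds N ov E \<longleftrightarrow> E \<subseteq> {..<N} \<and> colored_from N ov E = {..<N}"

definition wirtinger_number :: "nat \<Rightarrow> (nat \<Rightarrow> nat) \<Rightarrow> nat" where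
  "wirtinger_number N ov = (LEAST k. \<exists>E. generating_seeds N ov E \<and> card E = k)"

text \<open>Coxeter matrix on generators S; m s t = 0 encodes the label infinity
(no relation).\<close>

definition coxeter_matrix :: "'b set \<Rightarrow> ('b \<Rightarrow> 'b \<Rightarrow> nat) \<Rightarrow> bool" where
  "coxeter_matrix S m \<longleftrightarrow>
     (\<forall>s\<in>S. m s s = 1) \<and> (\<forall>s\<in>S. \<forall>t\<in>S. m s t = m t s) \<and>
     (\<forall>s\<in>S. \<forall>t\<in>S. s \<noteq> t \<longrightarrow> m s t \<noteq> 1)"

inductive cox_eq :: "'b set \<Rightarrow> ('b \<Rightarrow> 'b \<Rightarrow> nat) \<Rightarrow> 'b list \<Rightarrow> 'b list \<Rightarrow> bool"
  for S m where
  refl: "cox_eq S m w w"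
| sym: "cox_eq S m v w \<Longrightarrow> cox_eq S m w v"
| trans: "cox_eq S m u v \<Longrightarrow> cox_eq S m v w \<Longrightarrow> cox_eq S m u w"
| square: "s \<in> S \<Longrightarrow> cox_eq S m (u @ [s, s] @ v) (u @ v)"
| braid: "s \<in> S \<Longrightarrow> t \<in> S \<Longrightarrow> m s t \<noteq> 0 \<Longrightarrow>
          cox_eq S m (u @ concat (replicate (m s t) [s, t]) @ v) (u @ v)"

definition cox_class :: "'b set \<Rightarrow> ('b \<Rightarrow> 'b \<Rightarrow> nat) \<Rightarrow> 'b list \<Rightarrow> 'b list set" where
  "cox_class S m w = {v \<in> lists S. cox_eq S m w v}"

definition coxeter_group :: "'b set \<Rightarrow> ('b \<Rightarrow> 'b \<Rightarrow> nat) \<Rightarrow> 'b list set monoid" where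
  "coxeter_group S m =
     \<lparr> carrier = cox_class S m ` lists S,
       mult = (\<lambda>X Y. {w \<in> lists S. \<exists>x\<in>X. \<exists>y\<in>Y. cox_eq S m (x @ y) w}),
       one = cox_class S m [] \<rparr>"

definition reflections :: "'b set \<Rightarrow> ('b \<Rightarrow> 'b \<Rightarrow> nat) \<Rightarrow> 'b list set set" where
  "reflections S m =
     {x \<otimes>\<^bsub>coxeter_group S m\<^esub> cox_class S m [s] \<otimes>\<^bsub>coxeter_group S m\<^esub> inv\<^bsub>coxeter_group S m\<^esub> x
      | x s. x \<in> carrier (coxeter_group S m) \<and> s \<in> S}"

definition coxeter_rank :: "'b set \<Rightarrow> ('b \<Rightarrow> 'b \<Rightarrow> nat) \<Rightarrow> nat" where
  "coxeter_rank S m = (LEAST k. \<exists>R. R \<subseteq> reflections S m \<and> finite R \<and> card R = k \<and>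
       generate (coxeter_group S m) R = carrier (coxeter_group S m))"

definition Gen :: "'b set \<Rightarrow> ('b \<Rightarrow> 'b \<Rightarrow> nat) \<Rightarrow> 'b list set set set" where
  "Gen S m = {R. R \<subseteq> reflections S m \<and> finite R \<and> card R = coxeter_rank S m \<and>
       generate (coxeter_group S m) R = carrier (coxeter_group S m)}"

definition robust :: "'b set \<Rightarrow> ('b \<Rightarrow> 'b \<Rightarrow> nat) \<Rightarrow> 'b list set set set \<Rightarrow> bool" where
  "robust S m A \<longleftrightarrow> (\<forall>R\<in>Gen S m. \<exists>g\<in>carrier (coxeter_group S m).
      (\<lambda>r. inv\<^bsub>coxeter_group S m\<^esub> g \<otimes>\<^bsub>coxeter_group S m\<^esub> r \<otimes>\<^bsub>coxeter_group S m\<^esub> g) ` R \<in> A)"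

definition reflection_coloring ::
  "'b set \<Rightarrow> ('b \<Rightarrow> 'b \<Rightarrow> nat) \<Rightarrow> nat \<Rightarrow> (nat \<Rightarrow> nat) \<Rightarrow> (nat \<Rightarrow> 'b list set) \<Rightarrow> bool" where
  "reflection_coloring S m N ov g \<longleftrightarrow>
     (\<forall>i<N. g i \<in> reflections S m) \<and>
     (\<forall>(a, u1, u2)\<in>crossings N ov.
        g a \<otimes>\<^bsub>coxeter_group S m\<^esub> g u1 \<otimes>\<^bsub>coxeter_group S m\<^esub> inv\<^bsub>coxeter_group S m\<^esub> g a = g u2)"

end

theory Submission imports Defs begin

text \<open>A coloring move is a conjugation, so the colors of all strands lie in the subgroup
generated by the seed colors. Hence the seed colors of a coloring by reflections that generates
H are at most n = r(H) reflections generating H: they are exactly n distinct reflections and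
form a member of Gen(H). Robustness supplies an element h conjugating this member into A, and
conjugating the whole coloring by h gives again a coloring. Conversely, the seed labels of (ii)
already generate H.\<close>

lemma cox_eq_append_cong:
  "cox_eq S m u v \<Longrightarrow> cox_eq S m (x @ u @ y) (x @ v @ y)"
proof (induction rule: cox_eq.induct)
  case (refl w)
  show ?case by (rule cox_eq.refl)
next
  case (sym v w)
  show ?case by (rule cox_eq.sym[OF sym.IH])
next
  case (trans u v w)
  show ?case by (rule cox_eq.trans[OF trans.IH])
next
  case (square s u v)
  from cox_eq.square[OF square, where u = "x @ u" and v = "v @ y"] show ?case by simp
next
  case (braid s t u v)
  from cox_eq.braid[where m = m and s = s and t = t and u = "x @ u" and v = "v @ y", OF braid] show ?case by simp
qed

lemma cox_class_eq: "cox_eq S m x y \<Longrightarrow> cox_class S m x = cox_class S m y"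
  unfolding cox_class_def by (auto intro: cox_eq.trans cox_eq.sym)

lemma cox_class_mult:
  assumes "x \<in> lists S" "y \<in> lists S"
  shows "cox_class S m x \<otimes>\<^bsub>coxeter_group S m\<^esub> cox_class S m y = cox_class S m (x @ y)"
proof -
  have "cox_eq S m (x @ y) w"
    if "cox_eq S m x x'" "cox_eq S m y y'" "cox_eq S m (x' @ y') w" for x' y' w
  proof -
    have "cox_eq S m (x @ y) (x' @ y)" using cox_eq_append_cong[OF that(1), of "[]" y] by simp
    moreover have "cox_eq S m (x' @ y) (x' @ y')" using cox_eq_append_cong[OF that(2), of x' "[]"] by simp
    ultimately show ?thesis using that(3) by (meson cox_eq.trans)
  qed
  moreover have "x \<in> cox_class S m x" "y \<in> cox_class S m y"
    using assms by (auto simp: cox_class_def intro: cox_eq.refl)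
  ultimately show ?thesis
    unfolding coxeter_group_def by (auto simp: cox_class_def)
qed

lemma cox_eq_rev_append_self: "x \<in> lists S \<Longrightarrow> cox_eq S m (rev x @ x) []"
proof (induction x)
  case Nil
  show ?case by (simp add: cox_eq.refl)
next
  case (Cons a x)
  then have "cox_eq S m (rev x @ [a, a] @ x) (rev x @ x)" by (intro cox_eq.square) auto
  then show ?case using Cons by (auto intro: cox_eq.trans)
qed

lemma group_coxeter_group: "group (coxeter_group S m)"
proof (rule groupI)
  let ?G = "coxeter_group S m"
  have carrier_eq: "carrier ?G = cox_class S m ` lists S" and one: "\<one>\<^bsub>?G\<^esub> = cox_class S m []"
    by (simp_all add: coxeter_group_def)
  show "x \<otimes>\<^bsub>?G\<^esub> y \<in> carrier ?G" if "x \<in> carrier ?G" "y \<in> carrier ?G" for x y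
  proof -
    from that obtain a b where "a \<in> lists S" "b \<in> lists S" "x = cox_class S m a" "y = cox_class S m b"
      by (auto simp: carrier_eq)
    then show ?thesis by (simp add: carrier_eq cox_class_mult)
  qed
  show "\<one>\<^bsub>?G\<^esub> \<in> carrier ?G" by (auto simp: carrier_eq one)
  show "x \<otimes>\<^bsub>?G\<^esub> y \<otimes>\<^bsub>?G\<^esub> z = x \<otimes>\<^bsub>?G\<^esub> (y \<otimes>\<^bsub>?G\<^esub> z)"
    if "x \<in> carrier ?G" "y \<in> carrier ?G" "z \<in> carrier ?G" for x y z
  proof -
    from that obtain a b c where "a \<in> lists S" "b \<in> lists S" "c \<in> lists S"
      and "x = cox_class S m a" "y = cox_class S m b" "z = cox_class S m c"
      by (auto simp: carrier_eq)
    then show ?thesis by (simp add: cox_class_mult)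
  qed
  show "\<one>\<^bsub>?G\<^esub> \<otimes>\<^bsub>?G\<^esub> x = x" if "x \<in> carrier ?G" for x
  proof -
    from that obtain a where "a \<in> lists S" "x = cox_class S m a"
      by (auto simp: carrier_eq)
    then show ?thesis using cox_class_mult[of "[]" S a m] by (simp add: one)
  qed
  show "\<exists>y\<in>carrier ?G. y \<otimes>\<^bsub>?G\<^esub> x = \<one>\<^bsub>?G\<^esub>" if "x \<in> carrier ?G" for x
  proof -
    from that obtain w where w: "w \<in> lists S" "x = cox_class S m w"
      by (auto simp: carrier_eq)
    then have "cox_class S m (rev w) \<otimes>\<^bsub>?G\<^esub> x = cox_class S m (rev w @ w)"
      using cox_class_mult[of "rev w" S w m] by (simp add: in_lists_conv_set)
    also have "\<dots> = \<one>\<^bsub>?G\<^esub>"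
      unfolding one by (rule cox_class_eq[OF cox_eq_rev_append_self[OF w(1)]])
    finally show ?thesis using w(1) by (auto simp: carrier_eq)
  qed
qed

lemma (in group) m_inv_cancel_left: "x \<in> carrier G \<Longrightarrow> y \<in> carrier G \<Longrightarrow> x \<otimes> (inv x \<otimes> y) = y"
  by (simp flip: m_assoc)

lemma (in group) inv_m_cancel_left: "x \<in> carrier G \<Longrightarrow> y \<in> carrier G \<Longrightarrow> inv x \<otimes> (x \<otimes> y) = y"
  by (simp flip: m_assoc)

lemma (in group) conj_of_conj:
  assumes "x \<in> carrier G" "y \<in> carrier G" "h \<in> carrier G"
  shows "inv h \<otimes> (x \<otimes> y \<otimes> inv x) \<otimes> h = (inv h \<otimes> x) \<otimes> y \<otimes> inv (inv h \<otimes> x)"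
  using assms by (simp add: m_assoc inv_mult_group m_inv_cancel_left inv_m_cancel_left)

lemma (in group) conj_preserves_conj:
  assumes "x \<in> carrier G" "y \<in> carrier G" "h \<in> carrier G"
  shows "(inv h \<otimes> x \<otimes> h) \<otimes> (inv h \<otimes> y \<otimes> h) \<otimes> inv (inv h \<otimes> x \<otimes> h)
       = inv h \<otimes> (x \<otimes> y \<otimes> inv x) \<otimes> h"
  using assms by (simp add: m_assoc inv_mult_group m_inv_cancel_left inv_m_cancel_left)

lemma (in group) inj_on_conj:
  assumes "h \<in> carrier G"
  shows "inj_on (\<lambda>r. inv h \<otimes> r \<otimes> h) (carrier G)"
  using assms by (intro inj_onI) simp

lemma reflections_subset_carrier: "reflections S m \<subseteq> carrier (coxeter_group S m)"
proof
  interpret group "coxeter_group S m" by (rule group_coxeter_group)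
  fix r assume "r \<in> reflections S m"
  then obtain x s where "r = x \<otimes>\<^bsub>coxeter_group S m\<^esub> cox_class S m [s] \<otimes>\<^bsub>coxeter_group S m\<^esub> inv\<^bsub>coxeter_group S m\<^esub> x"
    "x \<in> carrier (coxeter_group S m)" "s \<in> S"
    unfolding reflections_def by blast
  moreover have "cox_class S m [s] \<in> carrier (coxeter_group S m)"
    using \<open>s \<in> S\<close> by (auto simp: coxeter_group_def)
  ultimately show "r \<in> carrier (coxeter_group S m)" by simp
qed

lemma conj_in_reflections:
  assumes "r \<in> reflections S m" "h \<in> carrier (coxeter_group S m)"
  shows "inv\<^bsub>coxeter_group S m\<^esub> h \<otimes>\<^bsub>coxeter_group S m\<^esub> r \<otimes>\<^bsub>coxeter_group S m\<^esub> h \<in> reflections S m"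
proof -
  interpret group "coxeter_group S m" by (rule group_coxeter_group)
  obtain x s where r: "r = x \<otimes>\<^bsub>coxeter_group S m\<^esub> cox_class S m [s] \<otimes>\<^bsub>coxeter_group S m\<^esub> inv\<^bsub>coxeter_group S m\<^esub> x"
    and x: "x \<in> carrier (coxeter_group S m)" and s: "s \<in> S"
    using assms(1) unfolding reflections_def by blast
  have "cox_class S m [s] \<in> carrier (coxeter_group S m)"
    using s by (auto simp: coxeter_group_def)
  then have "inv\<^bsub>coxeter_group S m\<^esub> h \<otimes>\<^bsub>coxeter_group S m\<^esub> r \<otimes>\<^bsub>coxeter_group S m\<^esub> h
      = (inv\<^bsub>coxeter_group S m\<^esub> h \<otimes>\<^bsub>coxeter_group S m\<^esub> x) \<otimes>\<^bsub>coxeter_group S m\<^esub> cox_class S m [s]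
        \<otimes>\<^bsub>coxeter_group S m\<^esub> inv\<^bsub>coxeter_group S m\<^esub> (inv\<^bsub>coxeter_group S m\<^esub> h \<otimes>\<^bsub>coxeter_group S m\<^esub> x)"
    using conj_of_conj[OF x _ assms(2)] r by simp
  then show ?thesis
    using x s assms(2) unfolding reflections_def by blast
qed

definition group_coloring :: "('a, 'c) monoid_scheme \<Rightarrow> nat \<Rightarrow> (nat \<Rightarrow> nat) \<Rightarrow> (nat \<Rightarrow> 'a) \<Rightarrow> bool" where
  "group_coloring G N ov g \<longleftrightarrow>
     (\<forall>i<N. g i \<in> carrier G) \<and>
     (\<forall>(a, u1, u2)\<in>crossings N ov. g a \<otimes>\<^bsub>G\<^esub> g u1 \<otimes>\<^bsub>G\<^esub> inv\<^bsub>G\<^esub> g a = g u2)"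

lemma reflection_coloring_iff:
  "reflection_coloring S m N ov g \<longleftrightarrow>
     group_coloring (coxeter_group S m) N ov g \<and> (\<forall>i<N. g i \<in> reflections S m)"
  using reflections_subset_carrier
  unfolding reflection_coloring_def group_coloring_def by blast

lemma (in group) colored_from_in_generate:
  assumes g: "group_coloring G N ov g" and E: "E \<subseteq> {..<N}" and i: "i \<in> colored_from N ov E"
  shows "g i \<in> generate G (g ` E)"
proof -
  have seeds: "g ` E \<subseteq> carrier G"
    using g E unfolding group_coloring_def by auto
  from i show ?thesis
  proof (induction rule: colored_from.induct)
    case (seed e)
    then show ?case by (auto intro: generate.incl)
  next
    case (move1 a u1 u2)
    have "g a \<otimes> g u1 \<otimes> inv g a = g u2"
      using g move1(1) unfolding group_coloring_def by blast
    with move1.IH generate_m_inv_closed[OF seeds move1.IH(1)] show ?case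
      by (metis generate.eng)
  next
    case (move2 a u1 u2)
    have "g a \<in> carrier G"
      using generate_in_carrier[OF seeds move2.IH(1)] .
    moreover have "g u1 \<in> carrier G"
      using g move2(1) unfolding group_coloring_def crossings_def by auto
    ultimately have "g u1 = inv g a \<otimes> (g a \<otimes> g u1 \<otimes> inv g a) \<otimes> g a"
      by (simp add: m_assoc inv_m_cancel_left)
    also have "g a \<otimes> g u1 \<otimes> inv g a = g u2"
      using g move2(1) unfolding group_coloring_def by blast
    finally have "g u1 = inv g a \<otimes> g u2 \<otimes> g a" .
    with move2.IH generate_m_inv_closed[OF seeds move2.IH(1)] show ?case
      by (metis generate.eng)
  qed
qed

lemma (in group) generate_coloring_eq_generate_seeds:
  assumes g: "group_coloring G N ov g" and E: "generating_seeds N ov E"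
  shows "generate G (g ` {..<N}) = generate G (g ` E)"
proof
  have seeds: "E \<subseteq> {..<N}" and colored: "colored_from N ov E = {..<N}"
    using E unfolding generating_seeds_def by auto
  have colors: "g ` {..<N} \<subseteq> carrier G"
    using g unfolding group_coloring_def by auto
  then have "g ` E \<subseteq> carrier G"
    using seeds by auto
  moreover have "g ` {..<N} \<subseteq> generate G (g ` E)"
    using colored_from_in_generate[OF g seeds] colored by auto
  ultimately show "generate G (g ` {..<N}) \<subseteq> generate G (g ` E)"
    by (intro generate_subgroup_incl generate_is_subgroup)
  show "generate G (g ` E) \<subseteq> generate G (g ` {..<N})"
    using seeds colors by (intro mono_generate) auto
qed

lemma (in group) group_coloring_conj:
  assumes D: "knot_diagram N ov" and g: "group_coloring G N ov g" and h: "h \<in> carrier G"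
  shows "group_coloring G N ov (\<lambda>i. inv h \<otimes> g i \<otimes> h)"
  unfolding group_coloring_def
proof (intro conjI allI impI ballI)
  show "inv h \<otimes> g i \<otimes> h \<in> carrier G" if "i < N" for i
    using that g h unfolding group_coloring_def by auto
next
  fix c assume c: "c \<in> crossings N ov"
  then obtain a u1 u2 where c_eq: "c = (a, u1, u2)" and "a < N" "u1 < N"
    using D unfolding crossings_def knot_diagram_def by auto
  then have "g a \<in> carrier G" "g u1 \<in> carrier G" and "g a \<otimes> g u1 \<otimes> inv g a = g u2"
    using g c unfolding group_coloring_def by auto
  with h show "case c of (a, u1, u2) \<Rightarrow>
      (inv h \<otimes> g a \<otimes> h) \<otimes> (inv h \<otimes> g u1 \<otimes> h) \<otimes> inv (inv h \<otimes> g a \<otimes> h) = inv h \<otimes> g u2 \<otimes> h"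
    unfolding c_eq by (simp add: conj_preserves_conj)
qed

lemma reflection_coloring_conj:
  assumes "knot_diagram N ov" "reflection_coloring S m N ov g" "h \<in> carrier (coxeter_group S m)"
  shows "reflection_coloring S m N ov
           (\<lambda>i. inv\<^bsub>coxeter_group S m\<^esub> h \<otimes>\<^bsub>coxeter_group S m\<^esub> g i \<otimes>\<^bsub>coxeter_group S m\<^esub> h)"
  using assms group.group_coloring_conj[OF group_coxeter_group] conj_in_reflections
  unfolding reflection_coloring_iff by blast

lemma coxeter_rank_le_card:
  assumes "R \<subseteq> reflections S m" "finite R"
    and "generate (coxeter_group S m) R = carrier (coxeter_group S m)"
  shows "coxeter_rank S m \<le> card R"
  unfolding coxeter_rank_def using assms by (intro Least_le) auto

lemma
  assumes g: "reflection_coloring S m N ov g"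
    and gen: "generate (coxeter_group S m) (g ` {..<N}) = carrier (coxeter_group S m)"
    and E: "generating_seeds N ov E" and rank: "coxeter_rank S m = card E"
  shows seed_colors_in_Gen: "g ` E \<in> Gen S m"
    and coloring_inj_on_seeds: "inj_on g E"
proof -
  interpret group "coxeter_group S m" by (rule group_coxeter_group)
  have "finite E"
    using E finite_subset unfolding generating_seeds_def by blast
  have reflections: "g ` E \<subseteq> reflections S m"
    using g E unfolding reflection_coloring_def generating_seeds_def by auto
  have seeds_gen: "generate (coxeter_group S m) (g ` E) = carrier (coxeter_group S m)"
    using gen generate_coloring_eq_generate_seeds g E reflection_coloring_iff by metis
  have "card E \<le> card (g ` E)"
    using coxeter_rank_le_card[OF reflections _ seeds_gen] \<open>finite E\<close> rank by simp
  then have card: "card (g ` E) = card E"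
    using card_image_le[OF \<open>finite E\<close>, of g] by simp
  show "inj_on g E"
    using \<open>finite E\<close> card by (rule eq_card_imp_inj_on)
  show "g ` E \<in> Gen S m"
    unfolding Gen_def using reflections \<open>finite E\<close> seeds_gen card rank by auto
qed

lemma robust_seed_coloring_if_generating_coloring:
  assumes D: "knot_diagram N ov" and E: "generating_seeds N ov E"
    and rank: "coxeter_rank S m = card E" and robust: "robust S m A"
    and g: "reflection_coloring S m N ov g"
    and gen: "generate (coxeter_group S m) (g ` {..<N}) = carrier (coxeter_group S m)"
  shows "\<exists>R\<in>A. \<exists>f. bij_betw f E R \<and>
           (\<exists>g. reflection_coloring S m N ov g \<and> (\<forall>e\<in>E. g e = f e))"
proof -
  let ?G = "coxeter_group S m"
  let ?conj = "\<lambda>h r. inv\<^bsub>?G\<^esub> h \<otimes>\<^bsub>?G\<^esub> r \<otimes>\<^bsub>?G\<^esub> h"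
  note seeds_Gen = seed_colors_in_Gen[OF g gen E rank]
  obtain h where h: "h \<in> carrier ?G" and conj_A: "?conj h ` g ` E \<in> A"
    using seeds_Gen robust unfolding robust_def by blast
  have "g ` E \<subseteq> carrier ?G"
    using seeds_Gen reflections_subset_carrier unfolding Gen_def by blast
  then have "inj_on (\<lambda>e. ?conj h (g e)) E"
    using comp_inj_on[OF coloring_inj_on_seeds[OF g gen E rank]
        inj_on_subset[OF group.inj_on_conj[OF group_coxeter_group h]]]
    by (simp add: comp_def)
  then have "bij_betw (\<lambda>e. ?conj h (g e)) E (?conj h ` g ` E)"
    by (simp add: bij_betw_def image_image)
  moreover have "reflection_coloring S m N ov (\<lambda>i. ?conj h (g i))"
    using reflection_coloring_conj[OF D g h] .
  ultimately show ?thesis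
    using conj_A by blast
qed

lemma generating_coloring_if_seed_colors_in_Gen:
  assumes g: "reflection_coloring S m N ov g" and E: "generating_seeds N ov E"
    and seeds_Gen: "g ` E \<in> Gen S m"
  shows "generate (coxeter_group S m) (g ` {..<N}) = carrier (coxeter_group S m)"
proof -
  have "generate (coxeter_group S m) (g ` {..<N}) = generate (coxeter_group S m) (g ` E)"
    using group.generate_coloring_eq_generate_seeds[OF group_coxeter_group _ E] g
    unfolding reflection_coloring_iff by blast
  with seeds_Gen show ?thesis
    unfolding Gen_def by auto
qed

theorem lemma3p1:
  fixes N :: nat and ov :: "nat \<Rightarrow> nat" and E :: "nat set"
    and S :: "'b set" and m :: "'b \<Rightarrow> 'b \<Rightarrow> nat" and A :: "'b list set set set"
  assumes "knot_diagram N ov"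
    and "generating_seeds N ov E"
    and "card E = wirtinger_number N ov"
    and "coxeter_matrix S m" and "finite S"
    and "coxeter_rank S m = card E"
    and "A \<subseteq> Gen S m" and "robust S m A"
  shows "(\<exists>g. reflection_coloring S m N ov g \<and>
             generate (coxeter_group S m) (g ` {..<N}) = carrier (coxeter_group S m))
     \<longleftrightarrow> (\<exists>R\<in>A. \<exists>f. bij_betw f E R \<and>
             (\<exists>g. reflection_coloring S m N ov g \<and> (\<forall>e\<in>E. g e = f e)))"
proof
  assume "\<exists>g. reflection_coloring S m N ov g \<and>
             generate (coxeter_group S m) (g ` {..<N}) = carrier (coxeter_group S m)"
  then show "\<exists>R\<in>A. \<exists>f. bij_betw f E R \<and>
             (\<exists>g. reflection_coloring S m N ov g \<and> (\<forall>e\<in>E. g e = f e))"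
    using robust_seed_coloring_if_generating_coloring[OF assms(1,2,6,8)] by blast
next
  assume "\<exists>R\<in>A. \<exists>f. bij_betw f E R \<and>
             (\<exists>g. reflection_coloring S m N ov g \<and> (\<forall>e\<in>E. g e = f e))"
  then obtain R f g where "R \<in> A" "bij_betw f E R"
    and g: "reflection_coloring S m N ov g" "\<forall>e\<in>E. g e = f e"
    by blast
  have "g ` E = f ` E"
    using g(2) by (intro image_cong) simp_all
  also have "\<dots> = R"
    using \<open>bij_betw f E R\<close> by (rule bij_betw_imp_surj_on)
  finally have "g ` E \<in> Gen S m"
    using \<open>R \<in> A\<close> assms(7) by blast
  then show "\<exists>g. reflection_coloring S m N ov g \<and>
             generate (coxeter_group S m) (g ` {..<N}) = carrier (coxeter_group S m)"
    using generating_coloring_if_seed_colors_in_Gen[OF g(1) assms(2)] g(1) by blast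
qed

end
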